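(* Let $G$ be a graph. Then for every induced subgraph $H$ of $G$, \[\chi(G) \leq \frac{1}{2} \left(\omega(G) + \frac{\Delta(G) + 1 + |G|}{2} \right) + \frac{3\chi(H) - |H|}{4}.\]
   Context: All graphs are finite and simple with non-empty vertex set; induced subgraphs are likewise taken with non-empty vertex set. $|G|$ denotes the number of vertices of $G$, $\chi(G)$ the chromatic number, $\omega(G)$ the clique number and $\Delta(G)$ the maximum degree. *)

theory Defs
  imports Complex_Main
begin

definition graph :: "'a set \<Rightarrow> 'a set set \<Rightarrow> bool" where
  "graph V E \<longleftrightarrow> finite V \<and> V \<noteq> {} \<and>
     (\<forall>e\<in>E. \<exists>u v. e = {u, v} \<and> u \<in> V \<and> v \<in> V \<and> u \<noteq> v)"

definition induced_edges :: "'a set set \<Rightarrow> 'a set \<Rightarrow> 'a set set" where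
  "induced_edges E S = {e \<in> E. e \<subseteq> S}"

definition colouring :: "'a set \<Rightarrow> 'a set set \<Rightarrow> nat \<Rightarrow> ('a \<Rightarrow> nat) \<Rightarrow> bool" where
  "colouring V E k f \<longleftrightarrow> (\<forall>v\<in>V. f v < k) \<and> (\<forall>u\<in>V. \<forall>v\<in>V. {u, v} \<in> E \<longrightarrow> f u \<noteq> f v)"

definition chromatic_number :: "'a set \<Rightarrow> 'a set set \<Rightarrow> nat" where
  "chromatic_number V E = (LEAST k. \<exists>f. colouring V E k f)"

definition clique :: "'a set \<Rightarrow> 'a set set \<Rightarrow> 'a set \<Rightarrow> bool" where
  "clique V E K \<longleftrightarrow> K \<subseteq> V \<and> (\<forall>u\<in>K. \<forall>v\<in>K. u \<noteq> v \<longrightarrow> {u, v} \<in> E)"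

definition clique_number :: "'a set \<Rightarrow> 'a set set \<Rightarrow> nat" where
  "clique_number V E = Max {card K | K. clique V E K}"

definition degree :: "'a set \<Rightarrow> 'a set set \<Rightarrow> 'a \<Rightarrow> nat" where
  "degree V E v = card {u \<in> V. {u, v} \<in> E}"

definition max_degree :: "'a set \<Rightarrow> 'a set set \<Rightarrow> nat" where
  "max_degree V E = Max (degree V E ` V)"

end

theory Submission
  imports Defs
begin

(*
  Induct on |G|:
  extend a colour class of an optimal colouring of H to a maximal independent set J of G.
  Removing J lowers chi(G) by at most one and Delta(G) by at least one, and removes a whole colour
  class of H, so the induction hypothesis for (G - J, H - J) gives the claim unless H is contained
  in J. In that case it suffices to bound 4 chi(G - J) by 2 omega + Delta + 1 + |G - J|, which
  follows from the induction hypothesis with an independent set of size three as H or, if G - J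
  has no such set, from the case of independence number at most two.

  There every colour class of an optimal colouring has one or two vertices, so 2 chi = |U| + n,
  where U, the set of vertices alone in their class, is a clique. For x in U the non-neighbours N
  of x form a clique, and n <= 1 + Delta + |N|. Recolouring arguments show that the partners
  (class mates) of the vertices of N are complete to U, and that every y in N whose partner misses
  the partner of another vertex of N is complete to U - {x}. Let C be the remaining vertices of N. Then both
  U - {x} together with N - C, and U together with the partners of C and of one further y in N,
  are cliques, and one of them has at least |U| + |N|/2 vertices.
*)

definition independent :: "'a set set \<Rightarrow> 'a set \<Rightarrow> bool" where
  "independent E J \<longleftrightarrow> (\<forall>a\<in>J. \<forall>b\<in>J. {a, b} \<notin> E)"

definition non_neighbours :: "'a set \<Rightarrow> 'a set set \<Rightarrow> 'a \<Rightarrow> 'a set" where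
  "non_neighbours W E v = {u \<in> W. u \<noteq> v \<and> {u, v} \<notin> E}"

lemma graph_loopless: "graph V E \<Longrightarrow> {v} \<notin> E"
  unfolding graph_def by (metis doubleton_eq_iff insert_absorb2)

lemma chromatic_number_induced_edges:
  "chromatic_number S (induced_edges E S) = chromatic_number S E"
proof -
  have "colouring S (induced_edges E S) = colouring S E"
    unfolding colouring_def induced_edges_def by (auto simp: fun_eq_iff)
  then show ?thesis
    unfolding chromatic_number_def by simp
qed

lemma chromatic_number_le: "colouring W E k f \<Longrightarrow> chromatic_number W E \<le> k"
  unfolding chromatic_number_def by (auto intro: Least_le)

lemma chromatic_number_empty: "chromatic_number {} E = 0"
  using chromatic_number_le[of "{}" E 0 "\<lambda>_. 0"] by (simp add: colouring_def)

lemma chromatic_number_independent: "independent E J \<Longrightarrow> chromatic_number J E \<le> 1"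
  by (rule chromatic_number_le[where f = "\<lambda>_. 0"]) (simp add: colouring_def independent_def)

lemma chromatic_number_Diff_colour_class_le:
  assumes f: "colouring S E k f" and "s \<in> S"
  shows "chromatic_number (S - {v \<in> S. f v = f s}) E \<le> k - 1"
proof -
  define g where "g v = (if f v > f s then f v - 1 else f v)" for v
  have "colouring (S - {v \<in> S. f v = f s}) E (k - 1) g"
    unfolding colouring_def
  proof (intro conjI ballI impI)
    fix v assume v: "v \<in> S - {v \<in> S. f v = f s}"
    have "f v < k" "f s < k" using f v \<open>s \<in> S\<close> unfolding colouring_def by auto
    then show "g v < k - 1" using v unfolding g_def by auto
  next
    fix u v assume u: "u \<in> S - {v \<in> S. f v = f s}" and v: "v \<in> S - {v \<in> S. f v = f s}"
      and "{u, v} \<in> E"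
    then have "f u \<noteq> f v" using f unfolding colouring_def by auto
    then show "g u \<noteq> g v" using u v unfolding g_def by auto
  qed
  then show ?thesis by (rule chromatic_number_le)
qed

lemma chromatic_number_less_if_colour_unused:
  assumes g: "colouring W E k g" and "b < k" and unused: "\<forall>v\<in>W. g v \<noteq> b"
  shows "chromatic_number W E < k"
proof -
  define h where "h v = (if g v = k - 1 then b else g v)" for v
  have "colouring W E (k - 1) h"
    unfolding colouring_def
  proof (intro conjI ballI impI)
    fix v assume "v \<in> W"
    moreover have "g v < k" if "v \<in> W" for v using g that unfolding colouring_def by auto
    ultimately show "h v < k - 1" using unused \<open>b < k\<close> unfolding h_def by fastforce
  next
    fix u v assume "u \<in> W" "v \<in> W" "{u, v} \<in> E"
    then have "g u \<noteq> g v" using g unfolding colouring_def by auto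
    then show "h u \<noteq> h v" using \<open>u \<in> W\<close> \<open>v \<in> W\<close> unused unfolding h_def by auto
  qed
  then have "chromatic_number W E \<le> k - 1" by (rule chromatic_number_le)
  then show ?thesis using \<open>b < k\<close> by linarith
qed

lemma clique_subset: "clique W E K \<Longrightarrow> K' \<subseteq> K \<Longrightarrow> clique W E K'"
  unfolding clique_def by blast

lemma clique_Un:
  assumes "clique W E A" and "clique W E B" and "\<forall>a\<in>A. \<forall>b\<in>B. a \<noteq> b \<longrightarrow> {a, b} \<in> E"
  shows "clique W E (A \<union> B)"
  using assms unfolding clique_def by (auto; metis insert_commute)

lemma finite_clique_cards: "finite W \<Longrightarrow> finite {card K | K. clique W E K}"
  unfolding clique_def by (rule finite_subset[of _ "card ` Pow W"]) auto

lemma card_le_clique_number: "finite W \<Longrightarrow> clique W E K \<Longrightarrow> card K \<le> clique_number W E"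
  unfolding clique_number_def by (rule Max_ge) (auto intro: finite_clique_cards)

lemma ex_clique_card_eq_clique_number:
  assumes "finite W" shows "\<exists>K. clique W E K \<and> card K = clique_number W E"
proof -
  have "clique W E {}" unfolding clique_def by simp
  then have "clique_number W E \<in> {card K | K. clique W E K}"
    unfolding clique_number_def using finite_clique_cards[OF assms] by (intro Max_in) auto
  then show ?thesis by (auto simp: eq_commute)
qed

lemma clique_number_mono:
  assumes "finite W" and "W' \<subseteq> W" shows "clique_number W' E \<le> clique_number W E"
proof -
  obtain K where "clique W' E K" and "card K = clique_number W' E"
    using ex_clique_card_eq_clique_number assms finite_subset by metis
  moreover have "clique W E K" using \<open>clique W' E K\<close> assms(2) unfolding clique_def by auto
  ultimately show ?thesis using card_le_clique_number[OF assms(1)] by metis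
qed

lemma clique_number_ge_1:
  assumes "finite W" and "v \<in> W" shows "1 \<le> clique_number W E"
proof -
  have "clique W E {v}" using \<open>v \<in> W\<close> unfolding clique_def by auto
  then show ?thesis using card_le_clique_number[OF assms(1)] by fastforce
qed

lemma degree_le_max_degree: "finite W \<Longrightarrow> v \<in> W \<Longrightarrow> degree W E v \<le> max_degree W E"
  unfolding max_degree_def by auto

lemma ex_degree_eq_max_degree:
  assumes "finite W" and "W \<noteq> {}" shows "\<exists>v\<in>W. degree W E v = max_degree W E"
proof -
  have "max_degree W E \<in> degree W E ` W"
    unfolding max_degree_def using assms by (intro Max_in) auto
  then show ?thesis by auto
qed

lemma max_degree_Diff_dominating_less:
  assumes "finite W" and "J \<subseteq> W" and dominating: "\<forall>v\<in>W - J. \<exists>j\<in>J. {v, j} \<in> E"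
    and "W - J \<noteq> {}"
  shows "max_degree (W - J) E < max_degree W E"
proof -
  obtain v where v: "v \<in> W - J" and "degree (W - J) E v = max_degree (W - J) E"
    using ex_degree_eq_max_degree[of "W - J" E] assms(1,4) by auto
  moreover obtain j where "j \<in> J" and "{v, j} \<in> E" using dominating v by blast
  then have "{u \<in> W - J. {u, v} \<in> E} \<subset> {u \<in> W. {u, v} \<in> E}"
    using \<open>J \<subseteq> W\<close> by (auto simp: insert_commute)
  then have "degree (W - J) E v < degree W E v"
    unfolding degree_def using \<open>finite W\<close> by (intro psubset_card_mono) auto
  ultimately show ?thesis using degree_le_max_degree[of W v E] \<open>finite W\<close> by auto
qed

(* Four times the bound (omega + (Delta + 1 + n) / 2) / 2 of the theorem. *)
abbreviation omega_delta_bound :: "'a set \<Rightarrow> 'a set set \<Rightarrow> nat" where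
  "omega_delta_bound W E \<equiv> 2 * clique_number W E + max_degree W E + 1 + card W"

lemma omega_delta_bound_Diff_dominating:
  assumes "finite W" and "J \<subseteq> W" and "\<forall>v\<in>W - J. \<exists>j\<in>J. {v, j} \<in> E" and "W - J \<noteq> {}"
  shows "omega_delta_bound (W - J) E + card J + 1 \<le> omega_delta_bound W E"
proof -
  have "clique_number (W - J) E \<le> clique_number W E"
    using clique_number_mono[OF assms(1) Diff_subset] .
  moreover have "max_degree (W - J) E < max_degree W E"
    using max_degree_Diff_dominating_less[OF assms] .
  moreover have "card (W - J) = card W - card J"
    using card_Diff_subset[OF finite_subset[OF assms(2,1)] assms(2)] .
  moreover have "card J \<le> card W" using card_mono[OF assms(1,2)] .
  ultimately show ?thesis by linarith
qed

lemma finite_non_neighbours: "finite W \<Longrightarrow> finite (non_neighbours W E v)"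
  unfolding non_neighbours_def by simp

lemma card_le_max_degree_non_neighbours:
  assumes "finite W" and "v \<in> W"
  shows "card W \<le> 1 + max_degree W E + card (non_neighbours W E v)"
proof -
  let ?A = "{u \<in> W. {u, v} \<in> E}" and ?B = "non_neighbours W E v"
  have finite: "finite ?A" "finite ?B" using assms(1) unfolding non_neighbours_def by auto
  have "card W \<le> card (insert v (?A \<union> ?B))"
    using finite by (intro card_mono) (auto simp: non_neighbours_def)
  also have "\<dots> \<le> Suc (card (?A \<union> ?B))" using finite by (simp add: card_insert_if)
  also have "\<dots> \<le> Suc (card ?A + card ?B)" using card_Un_le[of ?A ?B] by simp
  finally show ?thesis
    using degree_le_max_degree[OF assms, of E] unfolding degree_def by simp
qed

locale loopless =
  fixes E :: "'a set set"
  assumes no_loop: "{v} \<notin> E"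
begin

lemma adjacent_neq: "{u, v} \<in> E \<Longrightarrow> u \<noteq> v"
  using no_loop by auto

lemma colouring_chromatic_number:
  assumes "finite W" shows "\<exists>f. colouring W E (chromatic_number W E) f"
proof -
  obtain h where h: "bij_betw h W {0..<card W}" using ex_bij_betw_finite_nat[OF assms] by blast
  then have "colouring W E (card W) h"
    unfolding colouring_def bij_betw_def inj_on_def by (auto dest: adjacent_neq)
  then have "\<exists>k f. colouring W E k f" by blast
  then show ?thesis unfolding chromatic_number_def by (rule LeastI_ex)
qed

lemma chromatic_number_mono:
  assumes "finite W" and "W' \<subseteq> W" shows "chromatic_number W' E \<le> chromatic_number W E"
proof -
  obtain f where "colouring W E (chromatic_number W E) f"
    using colouring_chromatic_number[OF assms(1)] by blast
  then have "colouring W' E (chromatic_number W E) f"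
    using assms(2) unfolding colouring_def by blast
  then show ?thesis by (rule chromatic_number_le)
qed

lemma chromatic_number_ge_1:
  assumes "finite W" and "v \<in> W" shows "1 \<le> chromatic_number W E"
proof -
  obtain f where "colouring W E (chromatic_number W E) f"
    using colouring_chromatic_number[OF assms(1)] by blast
  then show ?thesis using \<open>v \<in> W\<close> unfolding colouring_def by fastforce
qed

lemma chromatic_number_le_Diff_independent:
  assumes "finite W" and J: "independent E J"
  shows "chromatic_number W E \<le> chromatic_number (W - J) E + 1"
proof -
  let ?k = "chromatic_number (W - J) E"
  obtain f where f: "colouring (W - J) E ?k f"
    using colouring_chromatic_number[of "W - J"] assms(1) by blast
  define g where "g v = (if v \<in> J then ?k else f v)" for v
  have "colouring W E (?k + 1) g"
    unfolding colouring_def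
  proof (intro conjI ballI impI)
    fix v assume "v \<in> W"
    then have "f v < ?k" if "v \<notin> J" using f that unfolding colouring_def by blast
    then show "g v < ?k + 1" unfolding g_def by auto
  next
    fix u v assume "u \<in> W" "v \<in> W" and uv: "{u, v} \<in> E"
    have "f w < ?k" if "w \<in> W - J" for w using f that unfolding colouring_def by auto
    moreover have "f u \<noteq> f v" if "u \<notin> J" "v \<notin> J"
      using f that \<open>u \<in> W\<close> \<open>v \<in> W\<close> uv unfolding colouring_def by auto
    moreover have "\<not> (u \<in> J \<and> v \<in> J)" using J uv unfolding independent_def by auto
    ultimately show "g u \<noteq> g v"
      unfolding g_def using \<open>u \<in> W\<close> \<open>v \<in> W\<close> by (metis DiffI less_irrefl_nat)
  qed
  then show ?thesis by (rule chromatic_number_le)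
qed

lemma ex_maximal_independent_superset:
  assumes "finite W" and "C \<subseteq> W" and "independent E C"
  shows "\<exists>J. C \<subseteq> J \<and> J \<subseteq> W \<and> independent E J \<and> (\<forall>v\<in>W - J. \<exists>j\<in>J. {v, j} \<in> E)"
  using assms
proof (induction "card (W - C)" arbitrary: C rule: less_induct)
  case less
  show ?case
  proof (cases "\<forall>v\<in>W - C. \<exists>j\<in>C. {v, j} \<in> E")
    case True
    then show ?thesis using less.prems by blast
  next
    case False
    then obtain v where v: "v \<in> W - C" and "\<forall>j\<in>C. {v, j} \<notin> E" by blast
    then have "independent E (insert v C)"
      using less.prems(3) no_loop unfolding independent_def by (auto simp: insert_commute)
    moreover have "card (W - insert v C) < card (W - C)"
      using v less.prems(1) by (intro psubset_card_mono) auto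
    ultimately obtain J where "insert v C \<subseteq> J" "J \<subseteq> W" "independent E J"
      and "\<forall>u\<in>W - J. \<exists>j\<in>J. {u, j} \<in> E"
      using less.hyps[of "insert v C"] less.prems v by blast
    then show ?thesis by blast
  qed
qed

end

locale optimal_colouring_alpha2 = loopless +
  fixes W :: "'a set" and f :: "'a \<Rightarrow> nat"
  assumes finite_W: "finite W"
    and colouring_f: "colouring W E (chromatic_number W E) f"
    and independent_card_le_2: "\<And>T. T \<subseteq> W \<Longrightarrow> independent E T \<Longrightarrow> card T \<le> 2"
begin

lemma colour_less: "v \<in> W \<Longrightarrow> f v < chromatic_number W E"
  using colouring_f unfolding colouring_def by blast

lemma same_colour_nonadjacent: "u \<in> W \<Longrightarrow> v \<in> W \<Longrightarrow> f u = f v \<Longrightarrow> {u, v} \<notin> E"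
  using colouring_f unfolding colouring_def by blast

lemma no_independent_triple:
  assumes "a \<in> W" "b \<in> W" "c \<in> W" "a \<noteq> b" "a \<noteq> c" "b \<noteq> c"
    and "{a, b} \<notin> E" "{a, c} \<notin> E" "{b, c} \<notin> E"
  shows False
proof -
  have "independent E {a, b, c}"
    using assms no_loop unfolding independent_def by (auto simp: insert_commute)
  moreover have "card {a, b, c} = 3" using assms by auto
  ultimately show False using independent_card_le_2[of "{a, b, c}"] assms by auto
qed

lemma no_three_same_colour:
  assumes "a \<in> W" "b \<in> W" "c \<in> W" "a \<noteq> b" "a \<noteq> c" "b \<noteq> c" "f a = f b" "f a = f c"
  shows False
  using no_independent_triple[of a b c] same_colour_nonadjacent assms by metis

lemma clique_non_neighbours: "v \<in> W \<Longrightarrow> clique W E (non_neighbours W E v)"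
  unfolding clique_def non_neighbours_def using no_independent_triple by blast

lemma colour_used: "c < chromatic_number W E \<Longrightarrow> \<exists>v\<in>W. f v = c"
  using chromatic_number_less_if_colour_unused[OF colouring_f] by blast

lemma no_recolouring_freeing_colour:
  assumes "M \<subseteq> W" and inj: "inj_on g M"
    and below: "\<And>m. m \<in> M \<Longrightarrow> g m < chromatic_number W E"
    and compatible: "\<And>m w. m \<in> M \<Longrightarrow> w \<in> W - M \<Longrightarrow> f w = g m \<Longrightarrow> {w, m} \<notin> E"
    and "m\<^sub>0 \<in> M" and freed: "\<And>w. w \<in> W \<Longrightarrow> f w = f m\<^sub>0 \<Longrightarrow> w \<in> M"
    and "f m\<^sub>0 \<notin> g ` M"
  shows False
proof -
  define h where "h v = (if v \<in> M then g v else f v)" for v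
  have "colouring W E (chromatic_number W E) h"
    unfolding colouring_def
  proof (intro conjI ballI impI)
    fix v assume "v \<in> W"
    then show "h v < chromatic_number W E" using below colour_less unfolding h_def by auto
  next
    fix u v assume "u \<in> W" "v \<in> W" and uv: "{u, v} \<in> E"
    then have "u \<noteq> v" by (simp add: adjacent_neq)
    consider "u \<in> M" "v \<in> M" | "u \<in> M" "v \<notin> M" | "u \<notin> M" "v \<in> M" | "u \<notin> M" "v \<notin> M"
      by blast
    then show "h u \<noteq> h v"
    proof cases
      case 1
      then show ?thesis using inj \<open>u \<noteq> v\<close> unfolding h_def inj_on_def by auto
    next
      case 2
      then show ?thesis
        using compatible[of u v] \<open>v \<in> W\<close> uv unfolding h_def by (auto simp: insert_commute)
    next
      case 3
      then show ?thesis using compatible[of v u] \<open>u \<in> W\<close> uv unfolding h_def by auto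
    next
      case 4
      then show ?thesis
        using same_colour_nonadjacent \<open>u \<in> W\<close> \<open>v \<in> W\<close> uv unfolding h_def by auto
    qed
  qed
  moreover have "\<forall>v\<in>W. h v \<noteq> f m\<^sub>0"
    using freed \<open>f m\<^sub>0 \<notin> g ` M\<close> unfolding h_def by (metis image_eqI)
  moreover have "f m\<^sub>0 < chromatic_number W E"
    using \<open>m\<^sub>0 \<in> M\<close> \<open>M \<subseteq> W\<close> colour_less by auto
  ultimately show False using chromatic_number_less_if_colour_unused by blast
qed

definition solitary :: "'a set" where
  "solitary = {x \<in> W. \<forall>v\<in>W. f v = f x \<longrightarrow> v = x}"

(* Only meaningful for non-solitary y, whose colour class is then {y, partner y}. *)
definition partner :: "'a \<Rightarrow> 'a" where
  "partner y = (SOME w. w \<in> W \<and> w \<noteq> y \<and> f w = f y)"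

lemma solitary_subset: "solitary \<subseteq> W"
  unfolding solitary_def by blast

lemma solitary_colour_unique: "x \<in> solitary \<Longrightarrow> v \<in> W \<Longrightarrow> f v = f x \<Longrightarrow> v = x"
  unfolding solitary_def by blast

lemma solitary_colour_neq: "z \<in> solitary \<Longrightarrow> v \<in> W \<Longrightarrow> v \<noteq> z \<Longrightarrow> f v \<noteq> f z"
  using solitary_colour_unique by blast

lemma partner:
  assumes "y \<in> W - solitary"
  shows "partner y \<in> W" and "partner y \<noteq> y" and "f (partner y) = f y"
proof -
  have "\<exists>w. w \<in> W \<and> w \<noteq> y \<and> f w = f y" using assms unfolding solitary_def by auto
  then have "partner y \<in> W \<and> partner y \<noteq> y \<and> f (partner y) = f y"
    unfolding partner_def by (rule someI_ex)
  then show "partner y \<in> W" and "partner y \<noteq> y" and "f (partner y) = f y" by auto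
qed

lemma eq_partner:
  assumes "y \<in> W - solitary" and "w \<in> W" and "w \<noteq> y" and "f w = f y"
  shows "w = partner y"
proof (rule ccontr)
  assume "w \<noteq> partner y"
  moreover note partner[OF assms(1)]
  ultimately show False
    using no_three_same_colour[of y w "partner y"] assms(1-4) by (metis DiffD1)
qed

lemma partner_not_solitary: "y \<in> W - solitary \<Longrightarrow> partner y \<notin> solitary"
  using partner solitary_colour_unique by (metis DiffD1)

lemma colour_class_weight:
  assumes "c < chromatic_number W E"
  shows "(\<Sum>v \<in> {v \<in> W. f v = c}. if v \<in> solitary then 2 else 1 :: nat) = 2"
proof -
  obtain v where v: "v \<in> W" "f v = c" using colour_used assms by blast
  show ?thesis
  proof (cases "v \<in> solitary")
    case True
    then have "{u \<in> W. f u = c} = {v}" using v solitary_colour_unique by auto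
    then show ?thesis using True by simp
  next
    case False
    then have "{u \<in> W. f u = c} = {v, partner v}" using v partner eq_partner by auto
    then show ?thesis using False partner(2)[of v] partner_not_solitary[of v] v by simp
  qed
qed

lemma card_solitary_add_card: "card solitary + card W = 2 * chromatic_number W E"
proof -
  have "card W = card solitary + card (W - solitary)"
    using finite_W solitary_subset
    by (metis card_Diff_subset card_mono finite_subset le_add_diff_inverse)
  then have "card solitary + card W = (\<Sum>v\<in>W. if v \<in> solitary then 2 else 1 :: nat)"
    using finite_W solitary_subset by (simp add: sum.If_cases Int_absorb1 Diff_eq)
  also have "\<dots> = (\<Sum>c<chromatic_number W E. \<Sum>v \<in> {v \<in> W. f v = c}. if v \<in> solitary then 2 else 1)"
    using finite_W colour_less by (intro sum.group[symmetric]) auto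
  also have "\<dots> = (\<Sum>c<chromatic_number W E. 2)"
    using colour_class_weight by (intro sum.cong) auto
  finally show ?thesis by simp
qed

lemma clique_solitary: "clique W E solitary"
  unfolding clique_def
proof (intro conjI ballI impI solitary_subset)
  fix x\<^sub>1 x\<^sub>2 assume x\<^sub>1: "x\<^sub>1 \<in> solitary" and x\<^sub>2: "x\<^sub>2 \<in> solitary" and "x\<^sub>1 \<noteq> x\<^sub>2"
  show "{x\<^sub>1, x\<^sub>2} \<in> E"
  proof (rule ccontr)
    assume "{x\<^sub>1, x\<^sub>2} \<notin> E"
    moreover have "x\<^sub>1 \<in> W" "x\<^sub>2 \<in> W" using x\<^sub>1 x\<^sub>2 solitary_subset by auto
    moreover have "f x\<^sub>2 \<noteq> f x\<^sub>1"
      using solitary_colour_neq[OF x\<^sub>1] \<open>x\<^sub>2 \<in> W\<close> \<open>x\<^sub>1 \<noteq> x\<^sub>2\<close> by blast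
    ultimately show False
      using solitary_colour_unique[OF x\<^sub>1] solitary_colour_unique[OF x\<^sub>2] colour_less
      by (intro no_recolouring_freeing_colour[of "{x\<^sub>2}" "\<lambda>_. f x\<^sub>1" x\<^sub>2]) auto
  qed
qed

definition complete_partners :: "'a \<Rightarrow> 'a set" where
  "complete_partners x = {y \<in> non_neighbours W E x.
     \<forall>y'\<in>non_neighbours W E x. y' \<noteq> y \<longrightarrow> {partner y, partner y'} \<in> E}"

context
  fixes x assumes x: "x \<in> solitary"
begin

lemma non_neighbour_not_solitary: "y \<in> non_neighbours W E x \<Longrightarrow> y \<notin> solitary"
  using clique_solitary x unfolding clique_def non_neighbours_def by auto

lemma non_neighbour_colour_neq: "y \<in> non_neighbours W E x \<Longrightarrow> f y \<noteq> f x"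
  using solitary_colour_unique[OF x] unfolding non_neighbours_def by auto

lemma non_neighbourD:
  assumes "y \<in> non_neighbours W E x"
  shows "y \<in> W - solitary" and "{y, x} \<notin> E" and "y \<noteq> x"
  using assms non_neighbour_not_solitary unfolding non_neighbours_def by auto

lemma partner_adjacent:
  assumes y: "y \<in> non_neighbours W E x" shows "{partner y, x} \<in> E"
proof (rule ccontr)
  assume nonadjacent: "{partner y, x} \<notin> E"
  note Y = non_neighbourD[OF y] and p = partner[OF Y(1)]
  have "x \<in> W" using x solitary_subset by auto
  have "partner y \<noteq> x" using p(3) non_neighbour_colour_neq[OF y] by metis
  moreover have "{y, partner y} \<notin> E" using same_colour_nonadjacent p Y(1) by auto
  ultimately show False
    using no_independent_triple[of x y "partner y"] p Y nonadjacent \<open>x \<in> W\<close>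
    by (auto simp: insert_commute)
qed

lemma partner_not_non_neighbour: "y \<in> non_neighbours W E x \<Longrightarrow> partner y \<notin> non_neighbours W E x"
  using partner_adjacent unfolding non_neighbours_def by auto

lemma inj_on_partner: "inj_on partner (non_neighbours W E x)"
proof (rule inj_onI, rule ccontr)
  fix y y' assume y: "y \<in> non_neighbours W E x" and y': "y' \<in> non_neighbours W E x"
    and "partner y = partner y'" and "y \<noteq> y'"
  then have "f y = f y'" using partner non_neighbourD by metis
  then have "{y, y'} \<notin> E" using same_colour_nonadjacent y y' unfolding non_neighbours_def by auto
  moreover have "x \<in> W" using x solitary_subset by auto
  ultimately show False using clique_non_neighbours y y' \<open>y \<noteq> y'\<close> unfolding clique_def by blast
qed

lemma partner_adjacent_solitary:
  assumes y: "y \<in> non_neighbours W E x" and z: "z \<in> solitary"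
  shows "{partner y, z} \<in> E"
proof (rule ccontr)
  assume nonadjacent: "{partner y, z} \<notin> E"
  note Y = non_neighbourD[OF y]
  have "x \<in> W" "z \<in> W" using x z solitary_subset by auto
  have "x \<noteq> z" using nonadjacent partner_adjacent[OF y] by auto
  have colours: "f y \<noteq> f x" "f x \<noteq> f z" "f y \<noteq> f z"
    using non_neighbour_colour_neq[OF y] solitary_colour_neq[OF z] \<open>x \<in> W\<close> \<open>x \<noteq> z\<close> Y(1) z
    by auto
  then have "z \<noteq> y" by blast
  define g where "g = f(y := f x, z := f y)"
  have g: "g y = f x" "g z = f y" using \<open>z \<noteq> y\<close> unfolding g_def by auto
  show False
  proof (rule no_recolouring_freeing_colour[of "{y, z}" g z])
    show "{y, z} \<subseteq> W" using Y(1) \<open>z \<in> W\<close> by auto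
    show "inj_on g {y, z}" using g colours by auto
    show "g m < chromatic_number W E" if "m \<in> {y, z}" for m
      using that g colour_less \<open>x \<in> W\<close> Y(1) by auto
    show "{w, m} \<notin> E" if "m \<in> {y, z}" "w \<in> W - {y, z}" "f w = g m" for m w
    proof -
      from that consider "m = y" "f w = f x" | "m = z" "f w = f y" using g by auto
      then show ?thesis
      proof cases
        case 1
        then have "w = x" using solitary_colour_unique[OF x] that(2) by auto
        then show ?thesis using 1 Y(2) by (simp add: insert_commute)
      next
        case 2
        then have "w = partner y" using eq_partner[OF Y(1)] that(2) by auto
        then show ?thesis using 2 nonadjacent by simp
      qed
    qed
    show "w \<in> {y, z}" if "w \<in> W" "f w = f z" for w
      using solitary_colour_unique[OF z] that by auto
    show "z \<in> {y, z}" by simp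
    show "f z \<notin> g ` {y, z}" using g colours by auto
  qed
qed

lemma not_complete_partnerE:
  assumes "y \<in> non_neighbours W E x - complete_partners x"
  obtains y' where "y' \<in> non_neighbours W E x" and "{partner y, partner y'} \<notin> E"
    and "f y' \<noteq> f y" and "partner y' \<noteq> y" and "y' \<noteq> y"
proof -
  obtain y' where y': "y' \<in> non_neighbours W E x" "y' \<noteq> y" "{partner y, partner y'} \<notin> E"
    using assms unfolding complete_partners_def by auto
  have "y' \<noteq> partner y" using y' partner_not_non_neighbour assms by auto
  then have "f y' \<noteq> f y" using eq_partner non_neighbourD(1) assms y' by blast
  moreover have "partner y' \<noteq> y" using partner_not_non_neighbour y' assms by auto
  ultimately show thesis using that y' by blast
qed

lemma adjacent_solitary_if_not_complete_partner:
  assumes y: "y \<in> non_neighbours W E x - complete_partners x"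
    and z: "z \<in> solitary" "z \<noteq> x"
  shows "{y, z} \<in> E"
proof (rule ccontr)
  assume nonadjacent: "{y, z} \<notin> E"
  obtain y' where y': "y' \<in> non_neighbours W E x"
    and partners_nonadjacent: "{partner y, partner y'} \<notin> E"
    and "f y' \<noteq> f y" "partner y' \<noteq> y" "y' \<noteq> y"
    using not_complete_partnerE[OF y] by blast
  have yN: "y \<in> non_neighbours W E x" using y by auto
  note Y = non_neighbourD[OF yN] and Y' = non_neighbourD[OF y'] and p' = partner[OF Y'(1)]
  have "x \<in> W" "z \<in> W" using x z solitary_subset by auto
  have colours: "f y \<noteq> f x" "f y' \<noteq> f x" "f x \<noteq> f z" "f y \<noteq> f z" "f y' \<noteq> f z"
    using non_neighbour_colour_neq[OF yN] non_neighbour_colour_neq[OF y']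
      solitary_colour_neq[OF z(1)] \<open>x \<in> W\<close> Y(1) Y'(1) z by auto
  define g where "g = f(y := f z, partner y' := f y, y' := f x)"
  have g: "g y = f z" "g (partner y') = f y" "g y' = f x"
    using \<open>partner y' \<noteq> y\<close> \<open>y' \<noteq> y\<close> p'(2) unfolding g_def by auto
  show False
  proof (rule no_recolouring_freeing_colour[of "{y, partner y', y'}" g y'])
    show "{y, partner y', y'} \<subseteq> W" using Y(1) Y'(1) p'(1) by auto
    show "inj_on g {y, partner y', y'}" using g colours \<open>f y' \<noteq> f y\<close> by auto
    show "g m < chromatic_number W E" if "m \<in> {y, partner y', y'}" for m
      using that g colour_less \<open>x \<in> W\<close> \<open>z \<in> W\<close> Y(1) by auto
    show "{w, m} \<notin> E" if "m \<in> {y, partner y', y'}" "w \<in> W - {y, partner y', y'}" "f w = g m"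
      for m w
    proof -
      from that consider "m = y" "f w = f z" | "m = partner y'" "f w = f y" | "m = y'" "f w = f x"
        using g by auto
      then show ?thesis
      proof cases
        case 1
        then have "w = z" using solitary_colour_unique[OF z(1)] that(2) by auto
        then show ?thesis using 1 nonadjacent by (simp add: insert_commute)
      next
        case 2
        then have "w = partner y" using eq_partner[OF Y(1)] that(2) by auto
        then show ?thesis using 2 partners_nonadjacent by simp
      next
        case 3
        then have "w = x" using solitary_colour_unique[OF x] that(2) by auto
        then show ?thesis using 3 Y'(2) by (simp add: insert_commute)
      qed
    qed
    show "w \<in> {y, partner y', y'}" if "w \<in> W" "f w = f y'" for w
      using eq_partner[OF Y'(1)] that by auto
    show "y' \<in> {y, partner y', y'}" by simp
    show "f y' \<notin> g ` {y, partner y', y'}" using g colours \<open>f y' \<noteq> f y\<close> by auto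
  qed
qed

lemma clique_solitary_partners:
  assumes I: "I \<subseteq> non_neighbours W E x" and "card (I - complete_partners x) \<le> 1"
  shows "clique W E (solitary \<union> partner ` I)"
proof (rule clique_Un[OF clique_solitary])
  have "finite I" using finite_subset[OF I finite_non_neighbours[OF finite_W]] .
  show "clique W E (partner ` I)"
    unfolding clique_def
  proof (intro conjI ballI impI)
    show "partner ` I \<subseteq> W" using I partner(1) non_neighbourD(1) by blast
    fix p p' assume "p \<in> partner ` I" "p' \<in> partner ` I" "p \<noteq> p'"
    then obtain y y' where "y \<in> I" "y' \<in> I" "y \<noteq> y'" and p: "p = partner y" "p' = partner y'"
      by auto
    then have "y \<in> complete_partners x \<or> y' \<in> complete_partners x"
      using assms(2) \<open>finite I\<close> card_le_Suc0_iff_eq[of "I - complete_partners x"] by auto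
    then show "{p, p'} \<in> E"
      using \<open>y \<in> I\<close> \<open>y' \<in> I\<close> \<open>y \<noteq> y'\<close> I p
      unfolding complete_partners_def by (auto simp: insert_commute)
  qed
  show "\<forall>a\<in>solitary. \<forall>b\<in>partner ` I. a \<noteq> b \<longrightarrow> {a, b} \<in> E"
    using partner_adjacent_solitary I by (auto simp: insert_commute)
qed

lemma card_solitary_partners:
  assumes I: "I \<subseteq> non_neighbours W E x"
  shows "card (solitary \<union> partner ` I) = card solitary + card I"
proof -
  have "finite I" "finite solitary"
    using finite_subset[OF I finite_non_neighbours[OF finite_W]]
      finite_subset[OF solitary_subset finite_W] .
  moreover have "solitary \<inter> partner ` I = {}"
    using I partner_not_solitary non_neighbourD(1) by blast
  moreover have "card (partner ` I) = card I"
    using inj_on_subset[OF inj_on_partner I] by (rule card_image)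
  ultimately show ?thesis by (simp add: card_Un_disjoint)
qed

lemma clique_solitary_non_neighbours:
  "clique W E ((solitary - {x}) \<union> (non_neighbours W E x - complete_partners x))"
proof (rule clique_Un)
  show "clique W E (solitary - {x})" using clique_solitary by (rule clique_subset) auto
  have "x \<in> W" using x solitary_subset by auto
  then show "clique W E (non_neighbours W E x - complete_partners x)"
    by (rule clique_subset[OF clique_non_neighbours]) auto
  show "\<forall>a\<in>solitary - {x}. \<forall>b\<in>non_neighbours W E x - complete_partners x. a \<noteq> b \<longrightarrow> {a, b} \<in> E"
  proof (intro ballI impI)
    fix a b assume "a \<in> solitary - {x}" "b \<in> non_neighbours W E x - complete_partners x"
    then have "{b, a} \<in> E" by (intro adjacent_solitary_if_not_complete_partner) auto
    then show "{a, b} \<in> E" by (simp add: insert_commute)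
  qed
qed

lemma card_solitary_non_neighbours:
  "card ((solitary - {x}) \<union> (non_neighbours W E x - complete_partners x))
    = card solitary - 1 + card (non_neighbours W E x - complete_partners x)"
proof -
  have "finite solitary" "finite (non_neighbours W E x)"
    using finite_W solitary_subset finite_subset unfolding non_neighbours_def by auto
  moreover have "(solitary - {x}) \<inter> (non_neighbours W E x - complete_partners x) = {}"
    using non_neighbour_not_solitary by blast
  ultimately show ?thesis using x by (simp add: card_Un_disjoint)
qed

lemma two_card_solitary_add_card_non_neighbours_le:
  "2 * card solitary + card (non_neighbours W E x) \<le> 2 * clique_number W E"
proof -
  let ?N = "non_neighbours W E x" and ?C = "complete_partners x"
  have "?C \<subseteq> ?N" and "finite ?N"
    using finite_W unfolding complete_partners_def non_neighbours_def by auto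
  then have card_N: "card ?N = card ?C + card (?N - ?C)"
    by (metis card_Diff_subset card_mono finite_subset le_add_diff_inverse)
  have "1 \<le> card solitary"
    using x finite_subset[OF solitary_subset finite_W]
    by (metis One_nat_def Suc_leI card_gt_0_iff empty_iff)
  consider (many) "card ?N + 2 \<le> 2 * card (?N - ?C)" | (few) "2 * card (?N - ?C) \<le> card ?N + 1"
    by linarith
  then show ?thesis
  proof cases
    case many
    have "card solitary - 1 + card (?N - ?C) \<le> clique_number W E"
      using card_le_clique_number[OF finite_W clique_solitary_non_neighbours]
      unfolding card_solitary_non_neighbours .
    then show ?thesis using many \<open>1 \<le> card solitary\<close> by linarith
  next
    case few
    obtain I where "I \<subseteq> ?N" "card (I - ?C) \<le> 1" "card ?N \<le> 2 * card I"
    proof (cases "?N - ?C = {}")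
      case True
      then have "card (?N - ?C) = 0" by (simp only: card.empty)
      then show thesis using that[of ?N] by simp
    next
      case False
      then obtain y where y: "y \<in> ?N - ?C" by blast
      then have "card (insert y ?C) = card ?C + 1"
        using \<open>?C \<subseteq> ?N\<close> \<open>finite ?N\<close> finite_subset by fastforce
      moreover have "insert y ?C - ?C = {y}" using y by auto
      ultimately show thesis
        using that[of "insert y ?C"] y \<open>?C \<subseteq> ?N\<close> few card_N by simp
    qed
    then have "card solitary + card I \<le> clique_number W E"
      using card_le_clique_number[OF finite_W clique_solitary_partners] card_solitary_partners
      by metis
    then show ?thesis using \<open>card ?N \<le> 2 * card I\<close> by linarith
  qed
qed

end

lemma four_chromatic_number_le:
  "4 * chromatic_number W E \<le> omega_delta_bound W E"
proof (cases "solitary = {}")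
  case True
  show ?thesis
  proof (cases "W = {}")
    case True
    then show ?thesis by (simp add: chromatic_number_empty)
  next
    case False
    then obtain v where "v \<in> W" by blast
    then have "card W \<le> 1 + max_degree W E + clique_number W E"
      using card_le_max_degree_non_neighbours[OF finite_W \<open>v \<in> W\<close>, of E]
        card_le_clique_number[OF finite_W clique_non_neighbours[OF \<open>v \<in> W\<close>]]
      by linarith
    then show ?thesis using card_solitary_add_card \<open>solitary = {}\<close> by simp
  qed
next
  case False
  then obtain x where x: "x \<in> solitary" by blast
  then have "x \<in> W" using solitary_subset by blast
  then have "card W \<le> 1 + max_degree W E + card (non_neighbours W E x)"
    by (rule card_le_max_degree_non_neighbours[OF finite_W])
  then show ?thesis
    using two_card_solitary_add_card_non_neighbours_le[OF x] card_solitary_add_card by linarith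
qed

end

context loopless
begin

lemma four_chromatic_number_le_if_independent_card_le_2:
  assumes "finite W" and "\<And>T. T \<subseteq> W \<Longrightarrow> independent E T \<Longrightarrow> card T \<le> 2"
  shows "4 * chromatic_number W E \<le> omega_delta_bound W E"
proof -
  obtain f where "colouring W E (chromatic_number W E) f"
    using colouring_chromatic_number[OF assms(1)] by blast
  then interpret optimal_colouring_alpha2 E W f
    using assms by unfold_locales
  show ?thesis by (rule four_chromatic_number_le)
qed

lemma four_chromatic_number_le_if_add_card_le:
  assumes "finite W"
    and add_card_le: "\<And>T. T \<subseteq> W \<Longrightarrow> T \<noteq> {} \<Longrightarrow>
      4 * chromatic_number W E + card T \<le> omega_delta_bound W E + 3 * chromatic_number T E"
  shows "4 * chromatic_number W E \<le> omega_delta_bound W E"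
proof (cases "\<exists>T \<subseteq> W. independent E T \<and> 3 \<le> card T")
  case True
  then obtain T where T: "T \<subseteq> W" "independent E T" "3 \<le> card T" by blast
  then have "T \<noteq> {}" by auto
  with add_card_le[OF T(1)] chromatic_number_independent[OF T(2)] T(3) show ?thesis by linarith
next
  case False
  have "card T \<le> 2" if "T \<subseteq> W" "independent E T" for T
  proof -
    have "\<not> 3 \<le> card T" using False that by blast
    then show ?thesis by linarith
  qed
  then show ?thesis by (rule four_chromatic_number_le_if_independent_card_le_2[OF assms(1)])
qed

lemma four_chromatic_number_add_card_le:
  assumes "finite W" and "S \<subseteq> W" and "S \<noteq> {}"
  shows "4 * chromatic_number W E + card S \<le> omega_delta_bound W E + 3 * chromatic_number S E"
  using assms
proof (induction "card W" arbitrary: W S rule: less_induct)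
  case less
  have "finite S" using finite_subset[OF less.prems(2,1)] .
  obtain f where f: "colouring S E (chromatic_number S E) f"
    using colouring_chromatic_number[OF \<open>finite S\<close>] by blast
  obtain s where "s \<in> S" using less.prems by blast
  then have "s \<in> W" using less.prems(2) ..
  let ?C = "{v \<in> S. f v = f s}"
  have C: "independent E ?C"
    unfolding independent_def
  proof (intro ballI)
    fix a b assume "a \<in> ?C" "b \<in> ?C"
    then have "a \<in> S" "b \<in> S" "f a = f b" by auto
    then show "{a, b} \<notin> E" using f unfolding colouring_def by blast
  qed
  have "?C \<subseteq> W" using less.prems(2) by auto
  obtain J where "?C \<subseteq> J" "J \<subseteq> W" and J: "independent E J"
    and dominating: "\<forall>v\<in>W - J. \<exists>j\<in>J. {v, j} \<in> E"
    using ex_maximal_independent_superset[OF less.prems(1) \<open>?C \<subseteq> W\<close> C] by blast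
  let ?W' = "W - J"
  have "finite ?W'" using less.prems(1) by blast
  have smaller: "card ?W' < card W"
    using \<open>s \<in> S\<close> \<open>s \<in> W\<close> \<open>?C \<subseteq> J\<close> less.prems(1) by (intro psubset_card_mono) auto
  have chi_W: "chromatic_number W E \<le> chromatic_number ?W' E + 1"
    using chromatic_number_le_Diff_independent[OF less.prems(1) J] .
  have "1 \<le> chromatic_number S E" using chromatic_number_ge_1[OF \<open>finite S\<close> \<open>s \<in> S\<close>] .
  show ?case
  proof (cases "?W' = {}")
    case True
    then have "chromatic_number W E \<le> 1" using chi_W by (simp only: chromatic_number_empty)
    moreover have "card S \<le> card W" using card_mono[OF less.prems(1,2)] .
    moreover have "1 \<le> clique_number W E" using clique_number_ge_1[OF less.prems(1) \<open>s \<in> W\<close>] .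
    ultimately show ?thesis using \<open>1 \<le> chromatic_number S E\<close> by linarith
  next
    case False
    have bound: "omega_delta_bound ?W' E + card J + 1 \<le> omega_delta_bound W E"
      using omega_delta_bound_Diff_dominating[OF less.prems(1) \<open>J \<subseteq> W\<close> dominating False] .
    have "card S \<le> card ((S - J) \<union> J)" using \<open>finite S\<close> \<open>J \<subseteq> W\<close> less.prems(1)
      by (intro card_mono) (auto intro: finite_subset)
    also have "\<dots> \<le> card (S - J) + card J" by (rule card_Un_le)
    finally have card_S: "card S \<le> card (S - J) + card J" .
    show ?thesis
    proof (cases "S - J = {}")
      case False
      have "chromatic_number (S - J) E \<le> chromatic_number (S - ?C) E"
        using \<open>finite S\<close> \<open>?C \<subseteq> J\<close> by (intro chromatic_number_mono) auto
      also have "\<dots> \<le> chromatic_number S E - 1"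
        by (rule chromatic_number_Diff_colour_class_le[OF f \<open>s \<in> S\<close>])
      finally have "chromatic_number (S - J) E \<le> chromatic_number S E - 1" .
      moreover have "4 * chromatic_number ?W' E + card (S - J)
          \<le> omega_delta_bound ?W' E + 3 * chromatic_number (S - J) E"
        using less.hyps[OF smaller \<open>finite ?W'\<close> _ False] less.prems(2) by (simp add: Diff_mono)
      ultimately show ?thesis
        using chi_W bound card_S \<open>1 \<le> chromatic_number S E\<close> by linarith
    next
      case True
      then have "card (S - J) = 0" by (simp only: card.empty)
      moreover have "4 * chromatic_number ?W' E \<le> omega_delta_bound ?W' E"
        using \<open>finite ?W'\<close> less.hyps[OF smaller \<open>finite ?W'\<close>]
        by (rule four_chromatic_number_le_if_add_card_le)
      ultimately show ?thesis
        using chi_W bound card_S \<open>1 \<le> chromatic_number S E\<close> by linarith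
    qed
  qed
qed

end

theorem proposition3:
  fixes V S :: "'a set" and E :: "'a set set"
  assumes "graph V E" and "S \<subseteq> V" and "S \<noteq> {}"
  shows "real (chromatic_number V E) \<le>
     (1/2) * (real (clique_number V E) + (real (max_degree V E) + 1 + real (card V)) / 2)
     + (3 * real (chromatic_number S (induced_edges E S)) - real (card S)) / 4"
proof -
  interpret loopless E
    using graph_loopless[OF assms(1)] by unfold_locales
  have "finite V" using assms(1) by (simp add: graph_def)
  then have "4 * chromatic_number V E + card S
      \<le> omega_delta_bound V E + 3 * chromatic_number S E"
    using four_chromatic_number_add_card_le assms(2,3) by blast
  then have "real (4 * chromatic_number V E + card S)
      \<le> real (2 * clique_number V E + max_degree V E + 1 + card V + 3 * chromatic_number S E)"
    by (simp only: of_nat_le_iff)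
  then show ?thesis
    unfolding chromatic_number_induced_edges by (simp add: field_simps)
qed

end
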